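(* Let $\mathrm{f}$ be a chief factor function, $G$ a finite group, $K\trianglelefteq G$, and $H/T$ a chief factor of $G$ with $K\le T$. Define normal subgroups $Z_1\le Z_2$ of $G$ containing $K$ by $Z_1/K=\mathrm{Z}(G/K,\mathrm{f})\cap T/K$ and $Z_2/K=\mathrm{Z}(G/K,\mathrm{f})\cap H/K$. Then $Z_2\ne Z_1$ if and only if $\mathrm{f}(H/T,G)=1$ and there exists $Z\trianglelefteq G$ with $Z_1\le Z$ such that $H/Z_1=T/Z_1\times Z/Z_1$. Moreover, in this case $Z_2=Z$.
   Context: A chief factor function is a function $\mathrm{f}$ assigning $0$ or $1$ to every pair $(H/K,G)$ with $G$ a finite group and $H/K$ a chief factor of $G$, such that: (1) $\mathrm{f}(H/K,G)=\mathrm{f}(M/N,G)$ whenever $H/K$ and $M/N$ are $G$-isomorphic chief factors of $G$; (2) $\mathrm{f}(H/K,G)=\mathrm{f}((H/N)/(K/N),G/N)$ for every $N\trianglelefteq G$ with $N\le K$. $\mathrm{Z}(G,\mathrm{f})$ denotes the greatest normal subgroup of $G$ such that $\mathrm{f}(H/K,G)=1$ for every chief factor $H/K$ of $G$ with $H\le \mathrm{Z}(G,\mathrm{f})$. *)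

theory Defs
  imports "HOL-Algebra.Algebra"
begin

definition chief_factor :: "('a,'b) monoid_scheme \<Rightarrow> 'a set \<Rightarrow> 'a set \<Rightarrow> bool" where
  "chief_factor G H K \<longleftrightarrow> normal H G \<and> normal K G \<and> K \<subset> H \<and>
     \<not> (\<exists>N. normal N G \<and> K \<subset> N \<and> N \<subset> H)"

definition conj_set :: "('a,'b) monoid_scheme \<Rightarrow> 'a \<Rightarrow> 'a set \<Rightarrow> 'a set" where
  "conj_set G g C = (\<lambda>c. g \<otimes>\<^bsub>G\<^esub> c \<otimes>\<^bsub>G\<^esub> inv\<^bsub>G\<^esub> g) ` C"

definition G_isomorphic :: "('a,'b) monoid_scheme \<Rightarrow> 'a set \<Rightarrow> 'a set \<Rightarrow> 'a set \<Rightarrow> 'a set \<Rightarrow> bool" where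
  "G_isomorphic G H K M N \<longleftrightarrow>
     (\<exists>\<phi>. \<phi> \<in> iso (G\<lparr>carrier := H\<rparr> Mod K) (G\<lparr>carrier := M\<rparr> Mod N) \<and>
        (\<forall>g\<in>carrier G. \<forall>C\<in>carrier (G\<lparr>carrier := H\<rparr> Mod K).
            \<phi> (conj_set G g C) = conj_set G g (\<phi> C)))"

definition quot_img :: "('a,'b) monoid_scheme \<Rightarrow> 'a set \<Rightarrow> 'a set \<Rightarrow> 'a set set" where
  "quot_img G N A = (\<lambda>a. N #>\<^bsub>G\<^esub> a) ` A"

text \<open>Condition (1) of a chief factor function, together with values in {0,1},
  for the restriction of f to finite groups whose elements have a fixed type.\<close>
definition cff_level :: "(('a,'b) monoid_scheme \<Rightarrow> 'a set \<Rightarrow> 'a set \<Rightarrow> nat) \<Rightarrow> bool" where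
  "cff_level f \<longleftrightarrow>
     (\<forall>G H K. group G \<and> finite (carrier G) \<and> chief_factor G H K \<longrightarrow> f G H K \<in> {0, 1}) \<and>
     (\<forall>G H K M N. group G \<and> finite (carrier G) \<and> chief_factor G H K \<and> chief_factor G M N \<and>
         G_isomorphic G H K M N \<longrightarrow> f G H K = f G M N)"

text \<open>Condition (2) of a chief factor function, linking f on groups G with f on
  quotient groups G/N (the quotient lives in the type of sets).\<close>
definition cff_link :: "(('a,'b) monoid_scheme \<Rightarrow> 'a set \<Rightarrow> 'a set \<Rightarrow> nat) \<Rightarrow>
     ('a set monoid \<Rightarrow> 'a set set \<Rightarrow> 'a set set \<Rightarrow> nat) \<Rightarrow> bool" where
  "cff_link f fq \<longleftrightarrow>
     (\<forall>G N H K. group G \<and> finite (carrier G) \<and> normal N G \<and> N \<subseteq> K \<and> chief_factor G H K \<longrightarrow>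
        f G H K = fq (G Mod N) (quot_img G N H) (quot_img G N K))"

definition Zf :: "('a,'b) monoid_scheme \<Rightarrow> (('a,'b) monoid_scheme \<Rightarrow> 'a set \<Rightarrow> 'a set \<Rightarrow> nat) \<Rightarrow> 'a set" where
  "Zf G f = (GREATEST Z. normal Z G \<and>
       (\<forall>H K. chief_factor G H K \<and> H \<subseteq> Z \<longrightarrow> f G H K = 1))"

end

theory Submission
  imports Defs
begin

text \<open>Let W be the preimage of Z(G/K, f), so that W is the largest normal subgroup containing K
  all of whose chief factors above K have f = 1, and Z1 = W \<inter> T, Z2 = W \<inter> H.
  Intersecting with, or multiplying by, a normal subgroup carries a chief factor to a G-isomorphic one
  (the second isomorphism theorem is compatible with conjugation), and f is constant on G-isomorphism
  classes. If Z2 \<noteq> Z1, then T Z2 = H by minimality of H/T, and H/T is G-isomorphic to the chief factor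
  Z2/Z1 below W, so f(H/T) = 1. Conversely, if f(H/T) = 1 and Z/Z1 is a normal complement of T/Z1 in H/Z1,
  then Z/Z1 is a chief factor G-isomorphic to H/T sitting on top of W \<inter> T, so Z \<subseteq> W by maximality
  of W, and Dedekind's modular law gives W \<inter> H = Z (T \<inter> W) = Z.\<close>

context group begin

lemma rcos_eq_iff:
  assumes "subgroup N G" "a \<in> carrier G" "b \<in> carrier G"
  shows "N #> a = N #> b \<longleftrightarrow> a \<otimes> inv b \<in> N"
  using assms repr_independence rcos_self subgroup.rcos_module_imp subgroup.rcos_module_rev is_group
  by metis

lemma set_mult_subset_left: "subgroup B G \<Longrightarrow> A \<subseteq> carrier G \<Longrightarrow> A \<subseteq> A <#> B"
  unfolding set_mult_def by (force dest: subgroup.one_closed)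

lemma set_mult_subset_right: "subgroup A G \<Longrightarrow> B \<subseteq> carrier G \<Longrightarrow> B \<subseteq> A <#> B"
  unfolding set_mult_def by (force dest: subgroup.one_closed)

lemma set_mult_subset_subgroup: "subgroup K G \<Longrightarrow> A \<subseteq> K \<Longrightarrow> B \<subseteq> K \<Longrightarrow> A <#> B \<subseteq> K"
  unfolding set_mult_def by (auto intro: subgroup.m_closed)

lemma set_mult_absorb:
  assumes "subgroup K G" "subgroup N G" "N \<subseteq> K"
  shows "K <#> N = K"
  using set_mult_subset_subgroup[OF assms(1) order_refl assms(3)]
    set_mult_subset_left[OF assms(2) subgroup.subset[OF assms(1)]]
  by blast

lemma set_mult_Int_modular:
  assumes A: "subgroup A G" and B: "subgroup B G" and C: "subgroup C G" and "A \<subseteq> C"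
  shows "(A <#> B) \<inter> C = A <#> (B \<inter> C)"
proof
  show "(A <#> B) \<inter> C \<subseteq> A <#> (B \<inter> C)"
  proof
    fix x assume "x \<in> (A <#> B) \<inter> C"
    then obtain a b where ab: "a \<in> A" "b \<in> B" "x = a \<otimes> b" "x \<in> C"
      unfolding set_mult_def by blast
    have "a \<in> carrier G" "b \<in> carrier G" using ab subgroup.mem_carrier[OF A] subgroup.mem_carrier[OF B] by auto
    then have "b = inv a \<otimes> x" using ab(3) by (simp add: m_assoc[symmetric])
    also have "\<dots> \<in> C"
      using ab \<open>A \<subseteq> C\<close> subgroup.m_closed[OF C] subgroup.m_inv_closed[OF C] by blast
    finally have "b \<in> B \<inter> C" using ab(2) by blast
    then show "x \<in> A <#> (B \<inter> C)" using ab(1,3) unfolding set_mult_def by blast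
  qed
  show "A <#> (B \<inter> C) \<subseteq> (A <#> B) \<inter> C"
    using \<open>A \<subseteq> C\<close> subgroup.m_closed[OF C] unfolding set_mult_def by blast
qed

lemma conj_image_normal:
  assumes Q: "Q \<lhd> G" and g: "g \<in> carrier G"
  shows "(\<lambda>q. g \<otimes> q \<otimes> inv g) ` Q = Q"
proof
  show "(\<lambda>q. g \<otimes> q \<otimes> inv g) ` Q \<subseteq> Q" using normal.inv_op_closed2[OF Q g] by blast
  show "Q \<subseteq> (\<lambda>q. g \<otimes> q \<otimes> inv g) ` Q"
  proof
    fix z assume z: "z \<in> Q"
    then have "z \<in> carrier G" using subgroup.mem_carrier[OF normal_imp_subgroup[OF Q]] by blast
    then have "z = g \<otimes> (inv g \<otimes> z \<otimes> g) \<otimes> inv g"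
      using g by (simp add: m_assoc[symmetric]) (simp add: m_assoc)
    then show "z \<in> (\<lambda>q. g \<otimes> q \<otimes> inv g) ` Q" by (rule image_eqI[OF _ normal.inv_op_closed1[OF Q g z]])
  qed
qed

lemma conj_set_rcos:
  assumes Q: "Q \<lhd> G" and g: "g \<in> carrier G" and m: "m \<in> carrier G"
  shows "conj_set G g (Q #> m) = Q #> (g \<otimes> m \<otimes> inv g)"
proof -
  have Qc: "Q \<subseteq> carrier G" using Q normal_imp_subgroup subgroup.subset by blast
  have split: "g \<otimes> (q \<otimes> m) \<otimes> inv g = (g \<otimes> q \<otimes> inv g) \<otimes> (g \<otimes> m \<otimes> inv g)"
    if "q \<in> carrier G" for q
  proof -
    have "inv g \<otimes> (g \<otimes> x) = x" if "x \<in> carrier G" for x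
      using that g by (simp add: m_assoc[symmetric])
    then show ?thesis using that g m by (simp add: m_assoc)
  qed
  have rcos: "P #> x = (\<lambda>p. p \<otimes> x) ` P" for P x unfolding r_coset_def by blast
  have "conj_set G g (Q #> m) = (\<lambda>q. g \<otimes> (q \<otimes> m) \<otimes> inv g) ` Q"
    unfolding conj_set_def rcos image_image ..
  also have "\<dots> = (\<lambda>x. x \<otimes> (g \<otimes> m \<otimes> inv g)) ` ((\<lambda>q. g \<otimes> q \<otimes> inv g) ` Q)"
    unfolding image_image using split Qc by (intro image_cong) (auto simp: subsetD)
  finally show ?thesis unfolding conj_image_normal[OF Q g] rcos .
qed

end

lemma carrier_FactGroup_subgroup: "carrier (G\<lparr>carrier := M\<rparr> Mod N) = quot_img G N M"
  by (auto simp: FactGroup_def RCOSETS_def quot_img_def)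

context group begin

lemma set_mult_rcos_absorb:
  assumes "subgroup K G" "subgroup N G" "N \<subseteq> K" "m \<in> carrier G"
  shows "K <#> (N #> m) = K #> m"
  using setmult_rcos_assoc[OF subgroup.subset subgroup.subset assms(4)] set_mult_absorb assms by metis

lemma second_iso_hom:
  assumes M: "M \<lhd> G" and K: "K \<lhd> G" and MH: "M \<subseteq> H"
  shows "(\<lambda>C. K <#> C) \<in> hom (G\<lparr>carrier := M\<rparr> Mod (M \<inter> K)) (G\<lparr>carrier := H\<rparr> Mod K)"
proof -
  have N: "M \<inter> K \<lhd> G" by (rule normal_subgroup_intersect[OF M K])
  have Mc: "M \<subseteq> carrier G" using M normal_imp_subgroup subgroup.subset by blast
  have rcos: "K <#> ((M \<inter> K) #> m) = K #> m" if "m \<in> M" for m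
    using set_mult_rcos_absorb[OF normal_imp_subgroup[OF K] normal_imp_subgroup[OF N] _] that Mc by blast
  have coset: "\<exists>m\<in>M. C = (M \<inter> K) #> m" if "C \<in> carrier (G\<lparr>carrier := M\<rparr> Mod (M \<inter> K))" for C
    using that by (auto simp: carrier_FactGroup_subgroup quot_img_def)
  show ?thesis
  proof (rule homI)
    fix C assume "C \<in> carrier (G\<lparr>carrier := M\<rparr> Mod (M \<inter> K))"
    then obtain m where "m \<in> M" "C = (M \<inter> K) #> m" using coset by blast
    then have "K <#> C = K #> m" "m \<in> H" using rcos MH by auto
    then show "K <#> C \<in> carrier (G\<lparr>carrier := H\<rparr> Mod K)"
      by (simp add: carrier_FactGroup_subgroup quot_img_def)
  next
    fix C D assume "C \<in> carrier (G\<lparr>carrier := M\<rparr> Mod (M \<inter> K))" "D \<in> carrier (G\<lparr>carrier := M\<rparr> Mod (M \<inter> K))"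
    then obtain a b where ab: "a \<in> M" "C = (M \<inter> K) #> a" "b \<in> M" "D = (M \<inter> K) #> b"
      using coset by metis
    have "K <#> (C <#> D) = K #> (a \<otimes> b)"
      using ab Mc normal.rcos_sum[OF N] set_mult_rcos_absorb[OF normal_imp_subgroup[OF K] normal_imp_subgroup[OF N]]
      by (auto simp: subsetD)
    also have "\<dots> = (K <#> C) <#> (K <#> D)"
      using ab Mc rcos normal.rcos_sum[OF K] by (auto simp: subsetD)
    finally show "K <#> (C \<otimes>\<^bsub>G\<lparr>carrier := M\<rparr> Mod (M \<inter> K)\<^esub> D)
        = (K <#> C) \<otimes>\<^bsub>G\<lparr>carrier := H\<rparr> Mod K\<^esub> (K <#> D)" by simp
  qed
qed

lemma second_iso_bij:
  assumes M: "M \<lhd> G" and K: "K \<lhd> G" and MH: "M \<subseteq> H" and HKM: "H \<subseteq> K <#> M"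
  shows "bij_betw (\<lambda>C. K <#> C)
    (carrier (G\<lparr>carrier := M\<rparr> Mod (M \<inter> K))) (carrier (G\<lparr>carrier := H\<rparr> Mod K))"
proof -
  have sK: "subgroup K G" and sN: "subgroup (M \<inter> K) G" and Mc: "M \<subseteq> carrier G"
    using M K normal_imp_subgroup normal_subgroup_intersect subgroup.subset by blast+
  have rcos: "K <#> ((M \<inter> K) #> m) = K #> m" if "m \<in> carrier G" for m
    using set_mult_rcos_absorb[OF sK sN _ that] by blast
  have "inj_on (\<lambda>C. K <#> C) (quot_img G (M \<inter> K) M)"
  proof (rule inj_onI)
    fix C D assume "C \<in> quot_img G (M \<inter> K) M" "D \<in> quot_img G (M \<inter> K) M" and eq: "K <#> C = K <#> D"
    then obtain a b where ab: "a \<in> M" "C = (M \<inter> K) #> a" "b \<in> M" "D = (M \<inter> K) #> b"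
      unfolding quot_img_def by blast
    then have abc: "a \<in> carrier G" "b \<in> carrier G" using Mc by auto
    then have "a \<otimes> inv b \<in> K" using eq ab rcos rcos_eq_iff[OF sK] by simp
    moreover have "a \<otimes> inv b \<in> M"
      using ab M normal_imp_subgroup subgroup.m_closed subgroup.m_inv_closed by metis
    ultimately show "C = D" using ab abc rcos_eq_iff[OF sN] by simp
  qed
  moreover have "carrier (G\<lparr>carrier := H\<rparr> Mod K) \<subseteq> (\<lambda>C. K <#> C) ` quot_img G (M \<inter> K) M"
  proof
    fix R assume "R \<in> carrier (G\<lparr>carrier := H\<rparr> Mod K)"
    then obtain h where h: "h \<in> H" "R = K #> h" by (auto simp: carrier_FactGroup_subgroup quot_img_def)
    then obtain k m where km: "k \<in> K" "m \<in> M" "h = k \<otimes> m"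
      using HKM unfolding set_mult_def by blast
    then have "R = (K #> k) #> m"
      using h subgroup.subset[OF sK] Mc coset_mult_assoc by (simp add: subsetD)
    also have "\<dots> = K <#> ((M \<inter> K) #> m)" using subgroup.rcos_const[OF sK is_group km(1)] rcos km Mc by auto
    finally show "R \<in> (\<lambda>C. K <#> C) ` quot_img G (M \<inter> K) M"
      using km(2) unfolding quot_img_def by blast
  qed
  moreover note second_iso_hom[OF M K MH]
  ultimately show ?thesis
    unfolding bij_betw_def hom_def carrier_FactGroup_subgroup by blast
qed

lemma G_isomorphic_second_iso:
  assumes M: "M \<lhd> G" and K: "K \<lhd> G"
    and MH: "M \<subseteq> H" and N: "N = M \<inter> K" and HKM: "H \<subseteq> K <#> M"
  shows "G_isomorphic G M N H K"
proof -
  have nN: "N \<lhd> G" unfolding N by (rule normal_subgroup_intersect[OF M K])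
  have conj: "K <#> conj_set G g C = conj_set G g (K <#> C)"
    if g: "g \<in> carrier G" and "C \<in> carrier (G\<lparr>carrier := M\<rparr> Mod N)" for g C
  proof -
    obtain m where m: "m \<in> M" "C = N #> m"
      using \<open>C \<in> carrier _\<close> by (auto simp: carrier_FactGroup_subgroup quot_img_def)
    then have "m \<in> carrier G" using M normal_imp_subgroup subgroup.subset by blast
    then show ?thesis
      using g m N set_mult_rcos_absorb[OF normal_imp_subgroup[OF K] normal_imp_subgroup[OF nN]]
        conj_set_rcos[OF nN] conj_set_rcos[OF K] by simp
  qed
  show ?thesis
    unfolding G_isomorphic_def iso_def
    using second_iso_hom[OF M K MH] second_iso_bij[OF M K MH HKM] conj N by blast
qed

end

lemma chief_factorD:
  assumes "chief_factor G H K"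
  shows "H \<lhd> G" "K \<lhd> G" "K \<subseteq> H" "K \<noteq> H"
  using assms unfolding chief_factor_def by auto

lemma chief_factor_between:
  assumes "chief_factor G H K" "N \<lhd> G" "K \<subseteq> N" "N \<subseteq> H"
  shows "N = K \<or> N = H"
  using assms unfolding chief_factor_def by blast

lemma cff_level_G_isomorphic:
  assumes "cff_level f" "group G" "finite (carrier G)"
    and "chief_factor G H K" "chief_factor G M N" "G_isomorphic G H K M N"
  shows "f G H K = f G M N"
  using assms unfolding cff_level_def by blast

context group begin

lemma chief_factor_Int:
  assumes cf: "chief_factor G H K" and C: "C \<lhd> G" and HKC: "H \<subseteq> K <#> C"
  shows "chief_factor G (H \<inter> C) (K \<inter> C)" "G_isomorphic G (H \<inter> C) (K \<inter> C) H K"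
proof -
  note cd = chief_factorD[OF cf]
  have sH: "subgroup H G" and sK: "subgroup K G" and sC: "subgroup C G"
    using cd C normal_imp_subgroup by blast+
  have H_eq: "H = K <#> (H \<inter> C)"
    using set_mult_Int_modular[OF sK sC sH cd(3)] HKC by (simp add: Int_commute inf.absorb_iff2)
  have Kc: "K \<subseteq> carrier G" and nKC: "K \<inter> C \<lhd> G"
    using subgroup.subset[OF sK] normal_subgroup_intersect[OF cd(2) C] by auto
  have "K \<inter> C = H \<inter> C \<inter> K" using cd(3) by blast
  with H_eq show "G_isomorphic G (H \<inter> C) (K \<inter> C) H K"
    using G_isomorphic_second_iso[OF normal_subgroup_intersect[OF cd(1) C] cd(2)] by simp
  have no_between: "P = K \<inter> C \<or> P = H \<inter> C" if P: "P \<lhd> G" "K \<inter> C \<subseteq> P" "P \<subseteq> H \<inter> C" for P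
  proof -
    have sP: "subgroup P G" using P(1) normal_imp_subgroup by blast
    have KP: "K <#> P \<lhd> G" using normal_subgroup_set_mult_closed[OF cd(2) P(1)] .
    have "K \<subseteq> K <#> P" "P \<subseteq> K <#> P"
      using set_mult_subset_left[OF sP Kc] set_mult_subset_right[OF sK subgroup.subset[OF sP]] .
    moreover have "K <#> P \<subseteq> H" using set_mult_subset_subgroup[OF sH cd(3)] P(3) by blast
    ultimately consider "K <#> P = K" | "K <#> P = H" using chief_factor_between[OF cf KP] by blast
    then show ?thesis
    proof cases
      case 1
      then show ?thesis using \<open>P \<subseteq> K <#> P\<close> P by blast
    next
      case 2
      have "H \<inter> C = (P <#> K) \<inter> C" using 2 commut_normal[OF sK P(1)] by simp
      also have "\<dots> = P <#> (K \<inter> C)" using set_mult_Int_modular[OF sP sK sC] P(3) by blast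
      also have "\<dots> = P" using set_mult_absorb[OF sP normal_imp_subgroup[OF nKC] P(2)] .
      finally show ?thesis by blast
    qed
  qed
  have "K \<inter> C \<noteq> H \<inter> C"
    using H_eq set_mult_absorb[OF sK normal_imp_subgroup[OF nKC]] cd(4) by auto
  then show "chief_factor G (H \<inter> C) (K \<inter> C)"
    unfolding chief_factor_def using no_between normal_subgroup_intersect[OF cd(1) C] nKC cd(3) by blast
qed

lemma chief_factor_set_mult:
  assumes cf: "chief_factor G H K" and A: "A \<lhd> G" and ns: "\<not> H \<subseteq> K <#> A"
  shows "chief_factor G (H <#> A) (K <#> A)" "G_isomorphic G H K (H <#> A) (K <#> A)"
proof -
  note cd = chief_factorD[OF cf]
  have sH: "subgroup H G" and sK: "subgroup K G" and sA: "subgroup A G"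
    using cd A normal_imp_subgroup by blast+
  have nHA: "H <#> A \<lhd> G" and nKA: "K <#> A \<lhd> G"
    using normal_subgroup_set_mult_closed[OF cd(1) A] normal_subgroup_set_mult_closed[OF cd(2) A] .
  have KKA: "K \<subseteq> K <#> A" and AKA: "A \<subseteq> K <#> A" and HHA: "H \<subseteq> H <#> A"
    using set_mult_subset_left[OF sA subgroup.subset[OF sK]] set_mult_subset_right[OF sK subgroup.subset[OF sA]]
      set_mult_subset_left[OF sA subgroup.subset[OF sH]] by blast+
  have HA_comm: "H <#> A = A <#> H" by (rule commut_normal[OF sH A])
  have "H \<inter> (K <#> A) = K"
    using chief_factor_between[OF cf normal_subgroup_intersect[OF cd(1) nKA]] cd(3) KKA ns by blast
  moreover have "H <#> A \<subseteq> K <#> A <#> H" using HA_comm mono_set_mult[OF AKA order_refl] by simp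
  ultimately show "G_isomorphic G H K (H <#> A) (K <#> A)"
    by (intro G_isomorphic_second_iso[OF cd(1) nKA HHA]) simp_all
  have no_between: "P = K <#> A \<or> P = H <#> A"
    if P: "P \<lhd> G" "K <#> A \<subseteq> P" "P \<subseteq> H <#> A" for P
  proof -
    have sP: "subgroup P G" using P(1) normal_imp_subgroup by blast
    consider "P \<inter> H = H" | "P \<inter> H = K"
      using chief_factor_between[OF cf normal_subgroup_intersect[OF P(1) cd(1)]] KKA P(2) cd(3) by blast
    then show ?thesis
    proof cases
      case 1
      then show ?thesis using set_mult_subset_subgroup[OF sP, of H A] AKA P by blast
    next
      case 2
      have "P = (A <#> H) \<inter> P" using P HA_comm by blast
      also have "\<dots> = A <#> (H \<inter> P)" using set_mult_Int_modular[OF sA sH sP] AKA P(2) by blast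
      also have "\<dots> = K <#> A" using 2 commut_normal[OF sK A] by (simp add: Int_commute)
      finally show ?thesis by blast
    qed
  qed
  have "K <#> A \<noteq> H <#> A" using HHA ns by blast
  then show "chief_factor G (H <#> A) (K <#> A)"
    unfolding chief_factor_def using no_between nHA nKA mono_set_mult[OF cd(3), of A A G] by blast
qed

end

text \<open>For K \<subseteq> Z this is Z/K \<le> Z(G/K, f), expressed without passing to G/K.\<close>
definition hypercentral_over ::
    "('a,'b) monoid_scheme \<Rightarrow> (('a,'b) monoid_scheme \<Rightarrow> 'a set \<Rightarrow> 'a set \<Rightarrow> nat) \<Rightarrow>
     'a set \<Rightarrow> 'a set \<Rightarrow> bool"
  where "hypercentral_over G f K Z \<longleftrightarrow> Z \<lhd> G \<and> K \<subseteq> Z \<and>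
     (\<forall>A B. chief_factor G A B \<and> K \<subseteq> B \<and> A \<subseteq> Z \<longrightarrow> f G A B = 1)"

lemma hypercentral_overD:
  assumes "hypercentral_over G f K Z"
  shows "Z \<lhd> G" "K \<subseteq> Z"
    and "\<And>A B. chief_factor G A B \<Longrightarrow> K \<subseteq> B \<Longrightarrow> A \<subseteq> Z \<Longrightarrow> f G A B = 1"
  using assms unfolding hypercentral_over_def by blast+

lemma hypercentral_overI:
  assumes "Z \<lhd> G" "K \<subseteq> Z"
    and "\<And>A B. chief_factor G A B \<Longrightarrow> K \<subseteq> B \<Longrightarrow> A \<subseteq> Z \<Longrightarrow> f G A B = 1"
  shows "hypercentral_over G f K Z"
  using assms unfolding hypercentral_over_def by blast

context group begin

lemma hypercentral_over_chief_factor_cases: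
  assumes lev: "cff_level f" and fin: "finite (carrier G)"
    and N: "hypercentral_over G f K N" and cf: "chief_factor G A B" and KB: "K \<subseteq> B"
  obtains "f G A B = 1"
  | "chief_factor G (A <#> N) (B <#> N)" "f G A B = f G (A <#> N) (B <#> N)"
proof (cases "A \<subseteq> B <#> N")
  case True
  note cfN = chief_factor_Int[OF cf hypercentral_overD(1)[OF N] True]
  have "f G (A \<inter> N) (B \<inter> N) = 1"
    using hypercentral_overD(2,3)[OF N] cfN(1) KB by blast
  then show thesis
    using that(1) cff_level_G_isomorphic[OF lev is_group fin cfN(1) cf cfN(2)] by simp
next
  case False
  note cfN = chief_factor_set_mult[OF cf hypercentral_overD(1)[OF N] False]
  then show thesis using that(2) cff_level_G_isomorphic[OF lev is_group fin cf] by blast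
qed

lemma hypercentral_over_set_mult:
  assumes lev: "cff_level f" and fin: "finite (carrier G)"
    and A: "hypercentral_over G f K A" and B: "hypercentral_over G f K B"
  shows "hypercentral_over G f K (A <#> B)"
proof (rule hypercentral_overI)
  note nA = hypercentral_overD(1)[OF A] and nB = hypercentral_overD(1)[OF B]
  have sA: "subgroup A G" and sB: "subgroup B G" using nA nB normal_imp_subgroup by blast+
  show nAB: "A <#> B \<lhd> G" by (rule normal_subgroup_set_mult_closed[OF nA nB])
  have A_AB: "A \<subseteq> A <#> B" by (rule set_mult_subset_left[OF sB subgroup.subset[OF sA]])
  then show "K \<subseteq> A <#> B" using hypercentral_overD(2)[OF A] by blast
  fix C D assume cf: "chief_factor G C D" and KD: "K \<subseteq> D" and CAB: "C \<subseteq> A <#> B"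
  show "f G C D = 1"
  proof (cases rule: hypercentral_over_chief_factor_cases[OF lev fin A cf KD])
    case 2
    note sD = normal_imp_subgroup[OF chief_factorD(2)[OF cf]]
    have "C <#> A \<subseteq> (A <#> B) <#> A" by (rule mono_set_mult[OF CAB order_refl])
    also have "\<dots> \<subseteq> A <#> B"
      by (rule set_mult_subset_subgroup[OF normal_imp_subgroup[OF nAB] order_refl A_AB])
    also have "\<dots> \<subseteq> (D <#> A) <#> B"
      by (rule mono_set_mult[OF set_mult_subset_right[OF sD subgroup.subset[OF sA]] order_refl])
    finally have "C <#> A \<subseteq> (D <#> A) <#> B" .
    note cfB = chief_factor_Int[OF 2(1) nB this]
    have "K \<subseteq> D <#> A"
      using KD set_mult_subset_left[OF sA subgroup.subset[OF sD]] by blast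
    then have "f G ((C <#> A) \<inter> B) ((D <#> A) \<inter> B) = 1"
      using hypercentral_overD(2,3)[OF B] cfB(1) by blast
    then show ?thesis
      using 2(2) cff_level_G_isomorphic[OF lev is_group fin cfB(1) 2(1) cfB(2)] by simp
  qed
qed

lemma hypercentral_over_chief_factor_extension:
  assumes lev: "cff_level f" and fin: "finite (carrier G)"
    and N: "hypercentral_over G f K N" and cfM: "chief_factor G M N" and fM: "f G M N = 1"
  shows "hypercentral_over G f K M"
proof (rule hypercentral_overI)
  note cdM = chief_factorD[OF cfM]
  show "M \<lhd> G" "K \<subseteq> M" using cdM hypercentral_overD(2)[OF N] by blast+
  have sM: "subgroup M G" and sN: "subgroup N G" using cdM normal_imp_subgroup by blast+
  fix A B assume cf: "chief_factor G A B" and KB: "K \<subseteq> B" and AM: "A \<subseteq> M"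
  show "f G A B = 1"
  proof (cases rule: hypercentral_over_chief_factor_cases[OF lev fin N cf KB])
    case 2
    note cd = chief_factorD[OF 2(1)]
    have "N \<subseteq> B <#> N"
      using set_mult_subset_right[OF normal_imp_subgroup subgroup.subset[OF sN]] chief_factorD(2)[OF cf] by blast
    moreover have "A <#> N \<subseteq> M" using set_mult_subset_subgroup[OF sM AM cdM(3)] .
    ultimately have "B <#> N = N \<and> A <#> N = M"
      using chief_factor_between[OF cfM cd(1)] chief_factor_between[OF cfM cd(2)] cd(3,4) by blast
    then show ?thesis using 2(2) fM by simp
  qed
qed

lemma hypercentral_over_subset:
  assumes "hypercentral_over G f K W" "Y \<lhd> G" "K \<subseteq> Y" "Y \<subseteq> W"
  shows "hypercentral_over G f K Y"
  using assms unfolding hypercentral_over_def by blast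

lemma hypercentral_over_greatest_ex:
  assumes lev: "cff_level f" and fin: "finite (carrier G)" and K: "K \<lhd> G"
  obtains W where "hypercentral_over G f K W" "\<And>Y. hypercentral_over G f K Y \<Longrightarrow> Y \<subseteq> W"
proof -
  let ?S = "{Z. hypercentral_over G f K Z}"
  have "?S \<subseteq> Pow (carrier G)"
    unfolding hypercentral_over_def using normal_imp_subgroup subgroup.subset by blast
  then have "finite ?S" using fin by (meson finite_Pow_iff finite_subset)
  moreover have "K \<in> ?S"
    using K unfolding hypercentral_over_def chief_factor_def by blast
  ultimately obtain W where W: "W \<in> ?S" and max: "\<And>Z. Z \<in> ?S \<Longrightarrow> W \<subseteq> Z \<Longrightarrow> W = Z"
    using finite_has_maximal by (metis empty_iff)
  have "Y \<subseteq> W" if Y: "hypercentral_over G f K Y" for Y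
  proof -
    have sW: "subgroup W G" and sY: "subgroup Y G"
      using W Y hypercentral_overD(1) normal_imp_subgroup by blast+
    have "W = W <#> Y"
      using max[of "W <#> Y"] hypercentral_over_set_mult[OF lev fin _ Y] W
        set_mult_subset_left[OF sY subgroup.subset[OF sW]] by blast
    then show ?thesis using set_mult_subset_right[OF sW subgroup.subset[OF sY]] by blast
  qed
  then show thesis using that W by blast
qed

lemma Zf_greatest:
  assumes lev: "cff_level f" and fin: "finite (carrier G)"
  shows "hypercentral_over G f {\<one>} (Zf G f)"
    and "\<And>Y. hypercentral_over G f {\<one>} Y \<Longrightarrow> Y \<subseteq> Zf G f"
proof -
  have "(Z \<lhd> G \<and> (\<forall>H K. chief_factor G H K \<and> H \<subseteq> Z \<longrightarrow> f G H K = 1))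
      = hypercentral_over G f {\<one>} Z" for Z
  proof -
    have "\<one> \<in> N" if "N \<lhd> G" for N
      using subgroup.one_closed[OF normal_imp_subgroup[OF that]] .
    then show ?thesis
      unfolding hypercentral_over_def using chief_factorD(2) by (metis empty_subsetI insert_subset)
  qed
  then have "Zf G f = (GREATEST Z. hypercentral_over G f {\<one>} Z)"
    unfolding Zf_def by simp
  moreover obtain W where "hypercentral_over G f {\<one>} W" "\<And>Y. hypercentral_over G f {\<one>} Y \<Longrightarrow> Y \<subseteq> W"
    using hypercentral_over_greatest_ex[OF lev fin one_is_normal] by blast
  ultimately show "hypercentral_over G f {\<one>} (Zf G f)" "\<And>Y. hypercentral_over G f {\<one>} Y \<Longrightarrow> Y \<subseteq> Zf G f"
    using Greatest_equality[of "hypercentral_over G f {\<one>}" W] by auto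
qed

end

definition quot_preimg :: "('a,'b) monoid_scheme \<Rightarrow> 'a set \<Rightarrow> 'a set set \<Rightarrow> 'a set" where
  "quot_preimg G N Q = {g \<in> carrier G. r_coset G N g \<in> Q}"

lemma (in group_hom) normal_vimage:
  assumes N: "N \<lhd> H" shows "{x \<in> carrier G. h x \<in> N} \<lhd> G"
proof (rule G.normal_invI)
  have sN: "subgroup N H" using N by (rule normal_imp_subgroup)
  show "subgroup {x \<in> carrier G. h x \<in> N} G"
    using subgroup.one_closed[OF sN] subgroup.m_closed[OF sN] subgroup.m_inv_closed[OF sN]
    by (intro G.subgroupI) (auto simp: hom_inv)
  show "x \<otimes> n \<otimes> inv x \<in> {x \<in> carrier G. h x \<in> N}"
    if "x \<in> carrier G" "n \<in> {x \<in> carrier G. h x \<in> N}" for x n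
    using that normal.inv_op_closed2[OF N] by (simp add: hom_inv)
qed

context group begin

lemma rcos_mem_quot_img_iff:
  assumes N: "subgroup N G" and A: "subgroup A G" and NA: "N \<subseteq> A" and g: "g \<in> carrier G"
  shows "N #> g \<in> quot_img G N A \<longleftrightarrow> g \<in> A"
proof
  assume "N #> g \<in> quot_img G N A"
  then obtain a where a: "a \<in> A" "N #> g = N #> a" unfolding quot_img_def by blast
  have ac: "a \<in> carrier G" using subgroup.mem_carrier[OF A a(1)] .
  have "g \<otimes> inv a \<in> A" using rcos_eq_iff[OF N g ac] a(2) NA by blast
  then have "g \<otimes> inv a \<otimes> a \<in> A" using subgroup.m_closed[OF A _ a(1)] by blast
  then show "g \<in> A" using g ac by (simp add: m_assoc)
qed (simp add: quot_img_def)

lemma quot_img_subset_iff: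
  assumes "subgroup N G" "A \<subseteq> carrier G" "subgroup B G" "N \<subseteq> B"
  shows "quot_img G N A \<subseteq> quot_img G N B \<longleftrightarrow> A \<subseteq> B"
  using rcos_mem_quot_img_iff[OF assms(1,3,4)] assms(2) unfolding quot_img_def by blast

lemma quot_img_eq_iff:
  assumes "subgroup N G" "subgroup A G" "subgroup B G" "N \<subseteq> A" "N \<subseteq> B"
  shows "quot_img G N A = quot_img G N B \<longleftrightarrow> A = B"
  using quot_img_subset_iff[OF assms(1) subgroup.subset assms(3,5), of A]
    quot_img_subset_iff[OF assms(1) subgroup.subset assms(2,4), of B] assms(2,3) by blast

lemma quot_img_quot_preimg:
  assumes "Q \<subseteq> carrier (G Mod N)"
  shows "quot_img G N (quot_preimg G N Q) = Q"
  using assms unfolding quot_img_def quot_preimg_def carrier_FactGroup by blast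

lemma group_hom_rcos:
  assumes "N \<lhd> G"
  shows "group_hom G (G Mod N) (\<lambda>g. N #> g)"
  using normal.r_coset_hom_Mod[OF assms] normal.factorgroup_is_group[OF assms] is_group
  by (simp add: group_hom_def group_hom_axioms_def)

lemma quot_img_normal:
  assumes "N \<lhd> G" "A \<lhd> G"
  shows "quot_img G N A \<lhd> G Mod N"
  unfolding quot_img_def
  by (rule normal.surj_hom_normal_subgroup[OF assms(2) group_hom_rcos[OF assms(1)]])
    (simp add: carrier_FactGroup)

lemma quot_preimg_normal:
  assumes N: "N \<lhd> G" and Q: "Q \<lhd> G Mod N"
  shows "quot_preimg G N Q \<lhd> G" "N \<subseteq> quot_preimg G N Q"
proof -
  show "quot_preimg G N Q \<lhd> G"
    unfolding quot_preimg_def by (rule group_hom.normal_vimage[OF group_hom_rcos[OF N] Q])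
  have "N \<in> Q" using subgroup.one_closed[OF normal_imp_subgroup[OF Q]] by simp
  then show "N \<subseteq> quot_preimg G N Q"
    unfolding quot_preimg_def
    using subgroup.subset[OF normal_imp_subgroup[OF N]] subgroup.rcos_const[OF normal_imp_subgroup[OF N] is_group]
    by auto
qed

lemma quot_img_self:
  assumes "subgroup N G"
  shows "quot_img G N N = {\<one>\<^bsub>G Mod N\<^esub>}"
  using subgroup.rcos_const[OF assms is_group] subgroup.one_closed[OF assms]
  unfolding quot_img_def by auto

lemma quot_img_Int:
  assumes "subgroup N G" "A \<subseteq> carrier G" "subgroup B G" "N \<subseteq> B"
  shows "quot_img G N (A \<inter> B) = quot_img G N A \<inter> quot_img G N B"
  using rcos_mem_quot_img_iff[OF assms(1,3,4)] assms(2) unfolding quot_img_def by blast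

lemma quot_img_set_mult:
  assumes N: "N \<lhd> G" and A: "A \<subseteq> carrier G" and B: "B \<subseteq> carrier G"
  shows "quot_img G N A <#>\<^bsub>G Mod N\<^esub> quot_img G N B = quot_img G N (A <#> B)"
proof -
  have "quot_img G N A <#>\<^bsub>G Mod N\<^esub> quot_img G N B = (\<Union>a\<in>A. \<Union>b\<in>B. {(N #> a) <#> (N #> b)})"
    unfolding quot_img_def set_mult_def[of "G Mod N"] by simp
  also have "\<dots> = (\<Union>a\<in>A. \<Union>b\<in>B. {N #> (a \<otimes> b)})"
    using A B normal.rcos_sum[OF N] by (auto simp: subsetD)
  also have "\<dots> = quot_img G N (A <#> B)"
    unfolding quot_img_def set_mult_def by blast
  finally show ?thesis .
qed


lemma chief_factor_quot_iff:
  assumes N: "N \<lhd> G" and A: "A \<lhd> G" and B: "B \<lhd> G" and NB: "N \<subseteq> B" and BA: "B \<subseteq> A"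
  shows "chief_factor G A B \<longleftrightarrow> chief_factor (G Mod N) (quot_img G N A) (quot_img G N B)"
proof -
  have sN: "subgroup N G" using N normal_imp_subgroup by blast
  have mono: "quot_img G N P \<subseteq> quot_img G N R \<longleftrightarrow> P \<subseteq> R"
    if "P \<lhd> G" "R \<lhd> G" "N \<subseteq> R" for P R
    using quot_img_subset_iff[OF sN subgroup.subset[OF normal_imp_subgroup[OF that(1)]]
        normal_imp_subgroup[OF that(2)] that(3)] .
  have NA: "N \<subseteq> A" using NB BA by blast
  have between: "(\<exists>Q. Q \<lhd> G Mod N \<and> quot_img G N B \<subset> Q \<and> Q \<subset> quot_img G N A)
      \<longleftrightarrow> (\<exists>P. P \<lhd> G \<and> B \<subset> P \<and> P \<subset> A)"
  proof
    assume "\<exists>Q. Q \<lhd> G Mod N \<and> quot_img G N B \<subset> Q \<and> Q \<subset> quot_img G N A"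
    then obtain Q where Q: "Q \<lhd> G Mod N" "quot_img G N B \<subset> Q" "Q \<subset> quot_img G N A" by blast
    note P = quot_preimg_normal[OF N Q(1)]
    have "quot_img G N (quot_preimg G N Q) = Q"
      using quot_img_quot_preimg normal_imp_subgroup[OF Q(1)] subgroup.subset by blast
    then have "B \<subseteq> quot_preimg G N Q" "quot_preimg G N Q \<subseteq> A"
      "B \<noteq> quot_preimg G N Q" "quot_preimg G N Q \<noteq> A"
      using Q mono[OF B P(1) P(2)] mono[OF P(1) A NA] by auto
    then show "\<exists>P. P \<lhd> G \<and> B \<subset> P \<and> P \<subset> A" using P(1) by auto
  next
    assume "\<exists>P. P \<lhd> G \<and> B \<subset> P \<and> P \<subset> A"
    then obtain P where P: "P \<lhd> G" "B \<subset> P" "P \<subset> A" by blast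
    then have "quot_img G N B \<subset> quot_img G N P" "quot_img G N P \<subset> quot_img G N A"
      using mono[OF B P(1)] mono[OF P(1) B NB] mono[OF P(1) A NA] mono[OF A P(1)] NB by auto
    then show "\<exists>Q. Q \<lhd> G Mod N \<and> quot_img G N B \<subset> Q \<and> Q \<subset> quot_img G N A"
      using quot_img_normal[OF N P(1)] by blast
  qed
  have "B \<subset> A \<longleftrightarrow> quot_img G N B \<subset> quot_img G N A"
    using mono[OF A B NB] mono[OF B A NA] by blast
  then show ?thesis
    unfolding chief_factor_def using between A B quot_img_normal[OF N A] quot_img_normal[OF N B] by blast
qed


lemma cff_linkD:
  assumes "cff_link f fq" "finite (carrier G)" "N \<lhd> G" "N \<subseteq> K" "chief_factor G H K"
  shows "f G H K = fq (G Mod N) (quot_img G N H) (quot_img G N K)"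
  using assms is_group unfolding cff_link_def by blast

lemma one_FactGroup_subset_quot_img:
  assumes "subgroup N G" "subgroup P G" "N \<subseteq> P"
  shows "{\<one>\<^bsub>G Mod N\<^esub>} \<subseteq> quot_img G N P"
proof -
  have "quot_img G N N \<subseteq> quot_img G N P"
    using quot_img_subset_iff[OF assms(1) subgroup.subset[OF assms(1)] assms(2,3)] assms(3) by blast
  then show ?thesis by (simp add: quot_img_self[OF assms(1)])
qed

lemma hypercentral_over_quot_img:
  assumes link: "cff_link f fq" and fin: "finite (carrier G)"
    and N: "N \<lhd> G" and hA: "hypercentral_over G f N A"
  shows "hypercentral_over (G Mod N) fq {\<one>\<^bsub>G Mod N\<^esub>} (quot_img G N A)"
proof (rule hypercentral_overI)
  have sN: "subgroup N G" and sA: "subgroup A G"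
    using N hypercentral_overD(1)[OF hA] normal_imp_subgroup by blast+
  note NA = hypercentral_overD(2)[OF hA]
  show "quot_img G N A \<lhd> G Mod N" "{\<one>\<^bsub>G Mod N\<^esub>} \<subseteq> quot_img G N A"
    using quot_img_normal[OF N hypercentral_overD(1)[OF hA]] one_FactGroup_subset_quot_img[OF sN sA NA] .
  fix C D assume cf: "chief_factor (G Mod N) C D" and CA: "C \<subseteq> quot_img G N A"
  note cd = chief_factorD[OF cf]
  define P where "P = quot_preimg G N C"
  define R where "R = quot_preimg G N D"
  have P: "P \<lhd> G" "N \<subseteq> P" and R: "R \<lhd> G" "N \<subseteq> R"
    unfolding P_def R_def using quot_preimg_normal[OF N] cd by blast+
  have imgs: "quot_img G N P = C" "quot_img G N R = D"
    unfolding P_def R_def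
    using quot_img_quot_preimg[OF subgroup.subset[OF normal_imp_subgroup[OF cd(1)]]]
      quot_img_quot_preimg[OF subgroup.subset[OF normal_imp_subgroup[OF cd(2)]]] by auto
  have sub: "R \<subseteq> P" "P \<subseteq> A"
    using imgs cd(3) CA
      quot_img_subset_iff[OF sN subgroup.subset[OF normal_imp_subgroup[OF R(1)]]
        normal_imp_subgroup[OF P(1)] P(2)]
      quot_img_subset_iff[OF sN subgroup.subset[OF normal_imp_subgroup[OF P(1)]] sA NA] by blast+
  have cfPR: "chief_factor G P R" using chief_factor_quot_iff[OF N P(1) R(1) R(2) sub(1)] imgs cf by simp
  have "f G P R = 1" using hypercentral_overD(3)[OF hA cfPR R(2) sub(2)] .
  then show "fq (G Mod N) C D = 1" using cff_linkD[OF link fin N R(2) cfPR] imgs by simp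
qed

lemma hypercentral_over_of_quot_img:
  assumes link: "cff_link f fq" and fin: "finite (carrier G)"
    and N: "N \<lhd> G" and A: "A \<lhd> G" and NA: "N \<subseteq> A"
    and hQ: "hypercentral_over (G Mod N) fq {\<one>\<^bsub>G Mod N\<^esub>} (quot_img G N A)"
  shows "hypercentral_over G f N A"
proof (rule hypercentral_overI[OF A NA])
  fix C D assume cf: "chief_factor G C D" and ND: "N \<subseteq> D" and CA: "C \<subseteq> A"
  note cd = chief_factorD[OF cf]
  have "chief_factor (G Mod N) (quot_img G N C) (quot_img G N D)"
    using chief_factor_quot_iff[OF N cd(1,2) ND cd(3)] cf by simp
  moreover have "quot_img G N C \<subseteq> quot_img G N A" using CA unfolding quot_img_def by blast
  moreover have "{\<one>\<^bsub>G Mod N\<^esub>} \<subseteq> quot_img G N D"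
    using one_FactGroup_subset_quot_img[OF normal_imp_subgroup[OF N] normal_imp_subgroup[OF cd(2)] ND] .
  ultimately show "f G C D = 1"
    using hypercentral_overD(3)[OF hQ] cff_linkD[OF link fin N ND cf] by simp
qed

lemma hypercentral_over_quot_preimg_Zf:
  assumes lev: "cff_level fq" and link: "cff_link f fq" and fin: "finite (carrier G)" and N: "N \<lhd> G"
  defines "W \<equiv> quot_preimg G N (Zf (G Mod N) fq)"
  shows "hypercentral_over G f N W" "\<And>Y. hypercentral_over G f N Y \<Longrightarrow> Y \<subseteq> W"
proof -
  interpret Q: group "G Mod N" by (rule normal.factorgroup_is_group[OF N])
  have "finite (carrier (G Mod N))" using fin by (simp add: carrier_FactGroup)
  note Zf = Q.Zf_greatest[OF lev this]
  note nZ = hypercentral_overD(1)[OF Zf(1)]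
  have W: "W \<lhd> G" "N \<subseteq> W" unfolding W_def using quot_preimg_normal[OF N nZ] by blast+
  have img: "quot_img G N W = Zf (G Mod N) fq"
    unfolding W_def using quot_img_quot_preimg[OF subgroup.subset[OF normal_imp_subgroup[OF nZ]]] .
  show "hypercentral_over G f N W"
    using hypercentral_over_of_quot_img[OF link fin N W] img Zf(1) by simp
  fix Y assume Y: "hypercentral_over G f N Y"
  note nY = hypercentral_overD(1,2)[OF Y]
  have "quot_img G N Y \<subseteq> quot_img G N W"
    using Zf(2) hypercentral_over_quot_img[OF link fin N Y] img by simp
  then show "Y \<subseteq> W"
    using quot_img_subset_iff[OF normal_imp_subgroup[OF N] subgroup.subset[OF normal_imp_subgroup[OF nY(1)]]
      normal_imp_subgroup[OF W(1)] W(2)] by blast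
qed


lemma quot_img_complement_iff:
  assumes N: "N \<lhd> G" and A: "subgroup A G" and B: "B \<lhd> G" and C: "subgroup C G"
    and NA: "N \<subseteq> A" and NB: "N \<subseteq> B" and NC: "N \<subseteq> C"
  shows "(quot_img G N A \<inter> quot_img G N B = {\<one>\<^bsub>G Mod N\<^esub>} \<and>
          quot_img G N A <#>\<^bsub>G Mod N\<^esub> quot_img G N B = quot_img G N C)
     \<longleftrightarrow> (A \<inter> B = N \<and> A <#> B = C)"
proof -
  have sN: "subgroup N G" and sB: "subgroup B G" using N B normal_imp_subgroup by blast+
  have sAB: "subgroup (A <#> B) G"
    using mult_norm_subgroup[OF B A] commut_normal[OF A B] by simp
  have "N \<subseteq> A <#> B" using NA set_mult_subset_left[OF sB subgroup.subset[OF A]] by blast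
  moreover have "quot_img G N A \<inter> quot_img G N B = quot_img G N (A \<inter> B)"
    using quot_img_Int[OF sN subgroup.subset[OF A] sB NB] by simp
  moreover have "quot_img G N A <#>\<^bsub>G Mod N\<^esub> quot_img G N B = quot_img G N (A <#> B)"
    using quot_img_set_mult[OF N subgroup.subset[OF A] subgroup.subset[OF sB]] .
  ultimately show ?thesis
    using quot_img_self[OF sN] quot_img_eq_iff[OF sN subgroups_Inter_pair[OF A sB] sN] NA NB
      quot_img_eq_iff[OF sN sAB C _ NC] by auto
qed

lemma hypercentral_over_meets_chief_factor:
  assumes lev: "cff_level f" and fin: "finite (carrier G)"
    and cf: "chief_factor G H T" and W: "hypercentral_over G f K W" and KT: "K \<subseteq> T"
    and ne: "W \<inter> H \<noteq> W \<inter> T"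
  shows "f G H T = 1" "T <#> (W \<inter> H) = H"
proof -
  note cd = chief_factorD[OF cf] and nW = hypercentral_overD(1)[OF W]
  have sH: "subgroup H G" and sT: "subgroup T G" using cd normal_imp_subgroup by blast+
  have nWH: "W \<inter> H \<lhd> G" using normal_subgroup_intersect[OF nW cd(1)] .
  have sWH: "subgroup (W \<inter> H) G" using normal_imp_subgroup[OF nWH] .
  have "T \<subseteq> T <#> (W \<inter> H)" "W \<inter> H \<subseteq> T <#> (W \<inter> H)"
    using set_mult_subset_left[OF sWH subgroup.subset[OF sT]]
      set_mult_subset_right[OF sT subgroup.subset[OF sWH]] .
  moreover have "T <#> (W \<inter> H) \<subseteq> H" using set_mult_subset_subgroup[OF sH cd(3)] by blast
  moreover have "\<not> W \<inter> H \<subseteq> T" using ne cd(3) by blast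
  ultimately show TWH: "T <#> (W \<inter> H) = H"
    using chief_factor_between[OF cf normal_subgroup_set_mult_closed[OF cd(2) nWH]] by blast
  then have "H \<subseteq> T <#> W" using mono_set_mult[of T T "W \<inter> H" W G] by blast
  note cfW = chief_factor_Int[OF cf nW this]
  have "f G (H \<inter> W) (T \<inter> W) = 1"
    using hypercentral_overD(2,3)[OF W] cfW(1) KT by blast
  then show "f G H T = 1"
    using cff_level_G_isomorphic[OF lev is_group fin cfW(1) cf cfW(2)] by simp
qed

lemma complement_eq_Int_greatest_hypercentral:
  assumes lev: "cff_level f" and fin: "finite (carrier G)"
    and W: "hypercentral_over G f K W" and W_max: "\<And>Y. hypercentral_over G f K Y \<Longrightarrow> Y \<subseteq> W"
    and cf: "chief_factor G H T" and KT: "K \<subseteq> T" and fHT: "f G H T = 1"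
    and Z: "Z \<lhd> G" and TZ: "T \<inter> Z = W \<inter> T" and TZH: "T <#> Z = H"
  shows "W \<inter> H = Z"
proof -
  note cd = chief_factorD[OF cf] and nW = hypercentral_overD(1)[OF W]
  have sT: "subgroup T G" and sZ: "subgroup Z G" and sW: "subgroup W G"
    using cd Z nW normal_imp_subgroup by blast+
  have nWT: "W \<inter> T \<lhd> G" using normal_subgroup_intersect[OF nW cd(2)] .
  have "Z \<subseteq> H" using set_mult_subset_right[OF sT subgroup.subset[OF sZ]] TZH by simp
  then have HZ: "H \<inter> Z = Z" by blast
  note cfZ = chief_factor_Int[OF cf Z, unfolded HZ TZ, OF equalityD1[OF TZH[symmetric]]]
  have "f G Z (W \<inter> T) = 1"
    using cff_level_G_isomorphic[OF lev is_group fin cfZ(1) cf cfZ(2)] fHT by simp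
  moreover have "hypercentral_over G f K (W \<inter> T)"
    using hypercentral_over_subset[OF W nWT] hypercentral_overD(2)[OF W] KT by blast
  ultimately have "hypercentral_over G f K Z"
    using hypercentral_over_chief_factor_extension[OF lev fin _ cfZ(1)] by blast
  then have ZW: "Z \<subseteq> W" by (rule W_max)
  have "W \<inter> H = (Z <#> T) \<inter> W" using TZH commut_normal[OF sT Z] by blast
  also have "\<dots> = Z <#> (T \<inter> W)" using set_mult_Int_modular[OF sZ sT sW ZW] .
  also have "\<dots> = Z"
  proof -
    have "T \<inter> W \<subseteq> Z" using TZ by blast
    then show ?thesis using set_mult_absorb[OF sZ normal_imp_subgroup[OF nWT]] by (simp add: Int_commute)
  qed
  finally show ?thesis .
qed

end

theorem lemma2:
  fixes G :: "('a, 'b) monoid_scheme"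
    and f :: "('a, 'b) monoid_scheme \<Rightarrow> 'a set \<Rightarrow> 'a set \<Rightarrow> nat"
    and fq :: "'a set monoid \<Rightarrow> 'a set set \<Rightarrow> 'a set set \<Rightarrow> nat"
    and K H T Z1 Z2 :: "'a set"
  assumes f_level: "cff_level f"
    and fq_level: "cff_level fq"
    and f_link: "cff_link f fq"
    and grp: "group G"
    and fin: "finite (carrier G)"
    and K_nml: "normal K G"
    and cf: "chief_factor G H T"
    and KT: "K \<subseteq> T"
    and Z1_def: "Z1 = {g \<in> carrier G. K #>\<^bsub>G\<^esub> g \<in> Zf (G Mod K) fq \<inter> quot_img G K T}"
    and Z2_def: "Z2 = {g \<in> carrier G. K #>\<^bsub>G\<^esub> g \<in> Zf (G Mod K) fq \<inter> quot_img G K H}"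
  shows "(Z2 \<noteq> Z1 \<longleftrightarrow>
            f G H T = 1 \<and>
            (\<exists>Z. normal Z G \<and> Z1 \<subseteq> Z \<and>
               quot_img G Z1 T \<inter> quot_img G Z1 Z = {\<one>\<^bsub>G Mod Z1\<^esub>} \<and>
               quot_img G Z1 T <#>\<^bsub>G Mod Z1\<^esub> quot_img G Z1 Z = quot_img G Z1 H))
         \<and> (\<forall>Z. f G H T = 1 \<and> normal Z G \<and> Z1 \<subseteq> Z \<and>
               quot_img G Z1 T \<inter> quot_img G Z1 Z = {\<one>\<^bsub>G Mod Z1\<^esub>} \<and>
               quot_img G Z1 T <#>\<^bsub>G Mod Z1\<^esub> quot_img G Z1 Z = quot_img G Z1 H
             \<longrightarrow> Z2 = Z)"
proof -
  interpret group G by (rule grp)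
  define W where "W = quot_preimg G K (Zf (G Mod K) fq)"
  note W = hypercentral_over_quot_preimg_Zf[OF fq_level f_link fin K_nml, folded W_def]
  note cd = chief_factorD[OF cf]
  have sK: "subgroup K G" and sT: "subgroup T G" and sH: "subgroup H G"
    using K_nml cd normal_imp_subgroup by blast+
  have Z1: "Z1 = W \<inter> T" and Z2: "Z2 = W \<inter> H"
    unfolding Z1_def Z2_def W_def quot_preimg_def
    using rcos_mem_quot_img_iff[OF sK sT KT] rcos_mem_quot_img_iff[OF sK sH] KT cd(3)
      subgroup.subset[OF sT] subgroup.subset[OF sH] by auto
  have nZ1: "Z1 \<lhd> G" unfolding Z1 using normal_subgroup_intersect[OF hypercentral_overD(1)[OF W(1)] cd(2)] .
  have complement: "(quot_img G Z1 T \<inter> quot_img G Z1 Z = {\<one>\<^bsub>G Mod Z1\<^esub>} \<and>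
        quot_img G Z1 T <#>\<^bsub>G Mod Z1\<^esub> quot_img G Z1 Z = quot_img G Z1 H) \<longleftrightarrow> T \<inter> Z = Z1 \<and> T <#>\<^bsub>G\<^esub> Z = H"
    if "Z \<lhd> G" "Z1 \<subseteq> Z" for Z
    using quot_img_complement_iff[OF nZ1 sT that(1) sH] that(2) Z1 cd(3) by blast
  have Z2_eq: "Z2 = Z" if "f G H T = 1" "Z \<lhd> G" "T \<inter> Z = Z1" "T <#>\<^bsub>G\<^esub> Z = H" for Z
    using complement_eq_Int_greatest_hypercentral[OF f_level fin W cf KT that(1,2)] that(3,4) Z1 Z2 by blast
  have "T <#>\<^bsub>G\<^esub> Z1 \<noteq> H" using set_mult_absorb[OF sT normal_imp_subgroup[OF nZ1]] Z1 cd(4) by auto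
  moreover have "f G H T = 1 \<and> Z2 \<lhd> G \<and> Z1 \<subseteq> Z2 \<and> T \<inter> Z2 = Z1 \<and> T <#>\<^bsub>G\<^esub> Z2 = H" if "Z2 \<noteq> Z1"
    using hypercentral_over_meets_chief_factor[OF f_level fin cf W(1) KT] that Z1 Z2 cd
      normal_subgroup_intersect[OF hypercentral_overD(1)[OF W(1)] cd(1)] by auto
  ultimately show ?thesis using complement Z2_eq by metis
qed

end
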